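(* In the $\ell^1$ linear social choice setting, the pure stable lottery rule $f_{\mathrm{PSLR}}$ has worst-case distortion $\mathrm{D}(f_{\mathrm{PSLR}})=O(d)$.
   Context: Setting ($\ell^1$ linear social choice). Fix a dimension $d\ge 1$ and let $\Delta_d=\{x\in\mathbb{R}^d_{\ge 0}:\sum_i x^i=1\}$. An instance consists of a finite set $V$ of $n$ voters and a finite set $C$ of $m$ candidates, each a vector in $\Delta_d$, with every voter vector in $\mathrm{Cone}(C)$ (nonnegative linear combinations of candidate vectors). Utility: $u_v(c)=v^\top c$. Each voter reports a ranking of $C$ consistent with its utilities (ties broken arbitrarily); $\sigma$ is the profile. $\mathrm{UW}(c)=\sum_{v\in V}u_v(c)$. A randomized voting rule outputs a distribution over $C$ based only on the profile (neither voter nor candidate vectors are seen). Distortion on an instance: $\max_c\mathrm{UW}(c)/\mathbb{E}_{c\sim f}[\mathrm{UW}(c)]$; $\mathrm{D}(f)$ is the supremum over all instances, as a function of $d$. Stable lottery: for a committee $W\subseteq C$ and $c\in C$, $S_c(W)$ is the set of voters ranking $c$ above every member of $W$; a distribution $\mathcal W$ over committees of size $k$ is a stable lottery if $\mathbb{E}_{W\sim\mathcal W}[|S_c(W)|]\le n/k$ for all $c\in C$ (such lotteries exist for every profile). Pure stable lottery rule $f_{\mathrm{PSLR}}$: given a stable lottery $\mathcal W$ over committees of size $2d$, choose each $c\in C$ with probability $\frac{1}{2d}\Pr_{W\sim\mathcal W}[c\in W]$. *)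

theory Defs
  imports "HOL-Probability.Probability_Mass_Function"
begin

(* Vectors in R^d are modelled as functions nat => real; only indices i < d matter. *)

definition in_simplex :: "nat \<Rightarrow> (nat \<Rightarrow> real) \<Rightarrow> bool" where
  "in_simplex d x \<longleftrightarrow> (\<forall>i<d. x i \<ge> 0) \<and> (\<Sum>i<d. x i) = 1"

definition inner_d :: "nat \<Rightarrow> (nat \<Rightarrow> real) \<Rightarrow> (nat \<Rightarrow> real) \<Rightarrow> real" where
  "inner_d d x y = (\<Sum>i<d. x i * y i)"

definition in_cone :: "nat \<Rightarrow> nat set \<Rightarrow> (nat \<Rightarrow> nat \<Rightarrow> real) \<Rightarrow> (nat \<Rightarrow> real) \<Rightarrow> bool" where
  "in_cone d C cv x \<longleftrightarrow>
     (\<exists>lam :: nat \<Rightarrow> real. (\<forall>c\<in>C. lam c \<ge> 0) \<and> (\<forall>i<d. x i = (\<Sum>c\<in>C. lam c * cv c i)))"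

definition l1_instance :: "nat \<Rightarrow> nat set \<Rightarrow> nat set \<Rightarrow> (nat \<Rightarrow> nat \<Rightarrow> real)
     \<Rightarrow> (nat \<Rightarrow> nat \<Rightarrow> real) \<Rightarrow> bool" where
  "l1_instance d V C vv cv \<longleftrightarrow> finite V \<and> finite C \<and>
     (\<forall>v\<in>V. in_simplex d (vv v)) \<and> (\<forall>c\<in>C. in_simplex d (cv c)) \<and>
     (\<forall>v\<in>V. in_cone d C cv (vv v))"

definition utility :: "nat \<Rightarrow> (nat \<Rightarrow> nat \<Rightarrow> real) \<Rightarrow> (nat \<Rightarrow> nat \<Rightarrow> real) \<Rightarrow> nat \<Rightarrow> nat \<Rightarrow> real" where
  "utility d vv cv v c = inner_d d (vv v) (cv c)"

definition UW :: "nat \<Rightarrow> nat set \<Rightarrow> (nat \<Rightarrow> nat \<Rightarrow> real) \<Rightarrow> (nat \<Rightarrow> nat \<Rightarrow> real) \<Rightarrow> nat \<Rightarrow> real" where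
  "UW d V vv cv c = (\<Sum>v\<in>V. utility d vv cv v c)"

(* A profile: rk v c is the position of c in voter v's ranking (smaller = better);
   it is a strict ranking of C (injective) consistent with utilities (ties broken arbitrarily). *)
definition consistent_profile :: "nat \<Rightarrow> nat set \<Rightarrow> nat set \<Rightarrow> (nat \<Rightarrow> nat \<Rightarrow> real)
     \<Rightarrow> (nat \<Rightarrow> nat \<Rightarrow> real) \<Rightarrow> (nat \<Rightarrow> nat \<Rightarrow> nat) \<Rightarrow> bool" where
  "consistent_profile d V C vv cv rk \<longleftrightarrow>
     (\<forall>v\<in>V. inj_on (rk v) C \<and>
        (\<forall>c\<in>C. \<forall>c'\<in>C. utility d vv cv v c > utility d vv cv v c' \<longrightarrow> rk v c < rk v c'))"

definition S_set :: "nat set \<Rightarrow> (nat \<Rightarrow> nat \<Rightarrow> nat) \<Rightarrow> nat \<Rightarrow> nat set \<Rightarrow> nat set" where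
  "S_set V rk c W = {v\<in>V. \<forall>w\<in>W. rk v c < rk v w}"

definition stable_lottery :: "nat set \<Rightarrow> nat set \<Rightarrow> (nat \<Rightarrow> nat \<Rightarrow> nat) \<Rightarrow> nat \<Rightarrow> nat set pmf \<Rightarrow> bool" where
  "stable_lottery V C rk k Wd \<longleftrightarrow>
     (\<forall>W\<in>set_pmf Wd. W \<subseteq> C \<and> card W = k) \<and>
     (\<forall>c\<in>C. measure_pmf.expectation Wd (\<lambda>W. real (card (S_set V rk c W)))
              \<le> real (card V) / real k)"

definition pslr_prob :: "nat \<Rightarrow> nat set pmf \<Rightarrow> nat \<Rightarrow> real" where
  "pslr_prob d Wd c = (1 / real (2 * d)) * measure_pmf.prob Wd {W. c \<in> W}"

end

theory Submission
  imports Defs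
begin

text \<open>
  Let \<open>N\<close> be the sum of all voter vectors, so that \<open>UW c = \<langle>N, c\<rangle>\<close>. Every voter vector lies
  in the simplex and in the cone of the candidates, hence is a convex combination of candidates;
  therefore \<open>\<parallel>N\<parallel>\<^sup>2 = (\<Sum>v. \<langle>N, v\<rangle>) \<le> n * max UW\<close>, and with \<open>n\<^sup>2 = (\<Sum>i. N i)\<^sup>2 \<le> d * \<parallel>N\<parallel>\<^sup>2\<close>
  this gives \<open>max UW \<ge> n / d\<close>.
  For a committee \<open>W\<close>, every voter outside \<open>S\<^sub>c(W)\<close> likes some member of \<open>W\<close> at least as
  much as \<open>c\<close>, and every utility is at most 1, so \<open>UW c \<le> (\<Sum>w\<in>W. UW w) + |S\<^sub>c(W)|\<close>.
  Averaging over a stable lottery of committees of size \<open>2d\<close> bounds the last term by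
  \<open>n / (2d) \<le> max UW / 2\<close>, while the average of \<open>\<Sum>w\<in>W. UW w\<close> is \<open>2d\<close> times the expected
  welfare of the rule. Taking \<open>c\<close> to maximise welfare gives distortion at most \<open>4d\<close>.
\<close>

lemma in_simplex_le_one:
  assumes "in_simplex d x" "i < d"
  shows "x i \<le> 1"
proof -
  have "x i \<le> (\<Sum>j<d. x j)"
    using assms unfolding in_simplex_def by (intro member_le_sum) auto
  then show ?thesis using assms(1) unfolding in_simplex_def by simp
qed

lemma inner_d_simplex_bounds:
  assumes "in_simplex d x" "in_simplex d y"
  shows "0 \<le> inner_d d x y" "inner_d d x y \<le> 1"
proof -
  show "0 \<le> inner_d d x y"
    using assms unfolding in_simplex_def inner_d_def by (intro sum_nonneg) auto
  have "inner_d d x y \<le> (\<Sum>i<d. x i)"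
    unfolding inner_d_def using assms in_simplex_le_one[OF assms(2)]
    by (intro sum_mono) (simp add: in_simplex_def mult_left_le)
  then show "inner_d d x y \<le> 1" using assms(1) unfolding in_simplex_def by simp
qed

lemma l1_instance_utility_bounds:
  assumes "l1_instance d V C vv cv" "v \<in> V" "c \<in> C"
  shows "0 \<le> utility d vv cv v c" "utility d vv cv v c \<le> 1"
  using assms inner_d_simplex_bounds unfolding utility_def l1_instance_def by auto

lemma l1_instance_UW_nonneg:
  assumes "l1_instance d V C vv cv" "c \<in> C"
  shows "0 \<le> UW d V vv cv c"
  unfolding UW_def using assms l1_instance_utility_bounds by (intro sum_nonneg) auto

lemma inner_d_cone_combination:
  assumes "\<forall>i<d. x i = (\<Sum>c\<in>C. lam c * cv c i)"
  shows "inner_d d y x = (\<Sum>c\<in>C. lam c * inner_d d y (cv c))"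
proof -
  have "inner_d d y x = (\<Sum>i<d. \<Sum>c\<in>C. lam c * (y i * cv c i))"
    unfolding inner_d_def using assms by (simp add: sum_distrib_left algebra_simps)
  also have "\<dots> = (\<Sum>c\<in>C. lam c * inner_d d y (cv c))"
    unfolding inner_d_def by (subst sum.swap) (simp add: sum_distrib_left)
  finally show ?thesis .
qed

lemma simplex_cone_coefficients_sum_one:
  assumes "in_simplex d x" "\<forall>c\<in>C. in_simplex d (cv c)"
    and "\<forall>i<d. x i = (\<Sum>c\<in>C. lam c * cv c i)"
  shows "(\<Sum>c\<in>C. lam c) = 1"
proof -
  have "1 = inner_d d (\<lambda>_. 1) x"
    using assms(1) unfolding in_simplex_def inner_d_def by simp
  also have "\<dots> = (\<Sum>c\<in>C. lam c * inner_d d (\<lambda>_. 1) (cv c))"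
    by (rule inner_d_cone_combination[OF assms(3)])
  also have "\<dots> = (\<Sum>c\<in>C. lam c)"
    using assms(2) unfolding in_simplex_def inner_d_def by simp
  finally show ?thesis by simp
qed

lemma inner_d_le_if_in_cone:
  assumes "in_simplex d x" "in_cone d C cv x" "\<forall>c\<in>C. in_simplex d (cv c)"
    and "\<forall>c\<in>C. inner_d d y (cv c) \<le> M"
  shows "inner_d d y x \<le> M"
proof -
  obtain lam where lam_nonneg: "\<forall>c\<in>C. lam c \<ge> 0"
    and x_eq: "\<forall>i<d. x i = (\<Sum>c\<in>C. lam c * cv c i)"
    using assms(2) unfolding in_cone_def by blast
  have "inner_d d y x = (\<Sum>c\<in>C. lam c * inner_d d y (cv c))"
    by (rule inner_d_cone_combination[OF x_eq])
  also have "\<dots> \<le> (\<Sum>c\<in>C. lam c * M)"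
    using lam_nonneg assms(4) by (intro sum_mono mult_left_mono) auto
  also have "\<dots> = M"
    using simplex_cone_coefficients_sum_one[OF assms(1,3) x_eq] by (simp flip: sum_distrib_right)
  finally show ?thesis .
qed

definition total_voter :: "nat set \<Rightarrow> (nat \<Rightarrow> nat \<Rightarrow> real) \<Rightarrow> nat \<Rightarrow> real" where
  "total_voter V vv i = (\<Sum>v\<in>V. vv v i)"

lemma UW_eq_inner_total_voter: "UW d V vv cv c = inner_d d (total_voter V vv) (cv c)"
  unfolding UW_def utility_def inner_d_def total_voter_def
  by (simp add: sum_distrib_right sum.swap[of _ V])

lemma inner_d_total_voter: "inner_d d y (total_voter V vv) = (\<Sum>v\<in>V. inner_d d y (vv v))"
  unfolding inner_d_def total_voter_def by (simp add: sum_distrib_left sum.swap[of _ V])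

lemma sum_total_voter:
  assumes "\<forall>v\<in>V. in_simplex d (vv v)"
  shows "(\<Sum>i<d. total_voter V vv i) = real (card V)"
  using inner_d_total_voter[of d "\<lambda>_. 1" V vv] assms
  unfolding inner_d_def in_simplex_def by simp

lemma inner_d_total_voter_self_le:
  assumes inst: "l1_instance d V C vv cv"
    and max: "\<forall>c\<in>C. UW d V vv cv c \<le> UW d V vv cv c0"
  shows "inner_d d (total_voter V vv) (total_voter V vv) \<le> real (card V) * UW d V vv cv c0"
proof -
  have "inner_d d (total_voter V vv) (vv v) \<le> UW d V vv cv c0" if "v \<in> V" for v
    using inst that max unfolding l1_instance_def UW_eq_inner_total_voter
    by (intro inner_d_le_if_in_cone[where C = C and cv = cv]) auto
  then have "(\<Sum>v\<in>V. inner_d d (total_voter V vv) (vv v)) \<le> (\<Sum>v\<in>V. UW d V vv cv c0)"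
    by (rule sum_mono)
  then show ?thesis by (simp add: inner_d_total_voter)
qed

lemma card_le_dim_mult_max_UW:
  assumes inst: "l1_instance d V C vv cv" and "c0 \<in> C"
    and max: "\<forall>c\<in>C. UW d V vv cv c \<le> UW d V vv cv c0"
  shows "real (card V) \<le> real d * UW d V vv cv c0"
proof (cases "V = {}")
  case True
  then show ?thesis using l1_instance_UW_nonneg[OF inst \<open>c0 \<in> C\<close>] by simp
next
  case False
  define N where "N = total_voter V vv"
  have "(real (card V))\<^sup>2 = (\<Sum>i<d. N i)\<^sup>2"
    using inst unfolding N_def l1_instance_def by (simp add: sum_total_voter)
  also have "\<dots> \<le> real d * inner_d d N N"
    using sum_squared_le_sum_of_squares[of N "{..<d}"]
    unfolding inner_d_def by (simp add: power2_eq_square mult.commute)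
  also have "\<dots> \<le> real d * (real (card V) * UW d V vv cv c0)"
    unfolding N_def using inner_d_total_voter_self_le[OF inst max] by (intro mult_left_mono) auto
  finally have "real (card V) * real (card V) \<le> real (card V) * (real d * UW d V vv cv c0)"
    by (simp add: power2_eq_square algebra_simps)
  moreover have "0 < real (card V)"
    using False inst unfolding l1_instance_def by (simp add: card_gt_0_iff)
  ultimately show ?thesis by (simp add: mult_le_cancel_left_pos)
qed

lemma UW_le_committee_UW_plus_card_S_set:
  assumes inst: "l1_instance d V C vv cv" and cons: "consistent_profile d V C vv cv rk"
    and "c \<in> C" "W \<subseteq> C"
  shows "UW d V vv cv c \<le> (\<Sum>w\<in>W. UW d V vv cv w) + real (card (S_set V rk c W))"
proof -
  let ?u = "utility d vv cv"
  have fin: "finite V" "finite W"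
    using inst \<open>W \<subseteq> C\<close> finite_subset unfolding l1_instance_def by auto
  have voter_bound: "?u v c \<le> (\<Sum>w\<in>W. ?u v w) + of_bool (v \<in> S_set V rk c W)"
    if "v \<in> V" for v
  proof (cases "v \<in> S_set V rk c W")
    case True
    have "0 \<le> (\<Sum>w\<in>W. ?u v w)"
      using \<open>W \<subseteq> C\<close> inst \<open>v \<in> V\<close> l1_instance_utility_bounds by (intro sum_nonneg) blast
    then show ?thesis using True l1_instance_utility_bounds[OF inst \<open>v \<in> V\<close> \<open>c \<in> C\<close>] by simp
  next
    case False
    then obtain w where "w \<in> W" "rk v w \<le> rk v c"
      using \<open>v \<in> V\<close> unfolding S_set_def by (auto simp: not_less)
    then have "?u v c \<le> ?u v w"
      using cons \<open>v \<in> V\<close> \<open>c \<in> C\<close> \<open>W \<subseteq> C\<close> unfolding consistent_profile_def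
      by (meson not_le subsetD)
    also have "\<dots> \<le> (\<Sum>w\<in>W. ?u v w)"
      using \<open>w \<in> W\<close> fin \<open>W \<subseteq> C\<close> inst \<open>v \<in> V\<close> l1_instance_utility_bounds
      by (intro member_le_sum) blast+
    finally show ?thesis using False by simp
  qed
  have "UW d V vv cv c \<le> (\<Sum>v\<in>V. (\<Sum>w\<in>W. ?u v w) + of_bool (v \<in> S_set V rk c W))"
    unfolding UW_def using voter_bound by (rule sum_mono)
  also have "\<dots> = (\<Sum>w\<in>W. UW d V vv cv w) + real (card (S_set V rk c W))"
    using fin unfolding UW_def sum.distrib
    by (simp add: sum.swap[of _ V] Int_absorb1 S_set_def Collect_conj_eq)
  finally show ?thesis .
qed

lemma stable_lottery_finite_set_pmf:
  assumes "finite C" "stable_lottery V C rk k Wd"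
  shows "finite (set_pmf Wd)"
  using assms unfolding stable_lottery_def by (meson PowI finite_Pow_iff finite_subset subsetI)

lemma sum_prob_mem_eq_expectation:
  fixes Wd :: "'a set pmf" and g :: "'a \<Rightarrow> real"
  assumes "finite C" "\<forall>W\<in>set_pmf Wd. W \<subseteq> C"
  shows "(\<Sum>c\<in>C. measure_pmf.prob Wd {W. c \<in> W} * g c)
    = measure_pmf.expectation Wd (\<lambda>W. \<Sum>w\<in>W. g w)"
proof -
  have "(\<Sum>c\<in>C. measure_pmf.prob Wd {W. c \<in> W} * g c)
      = measure_pmf.expectation Wd (\<lambda>W. \<Sum>c\<in>C. indicator {W. c \<in> W} W * g c)"
    by (subst Bochner_Integration.integral_sum) (simp_all add: less_top[symmetric])
  also have "\<dots> = measure_pmf.expectation Wd (\<lambda>W. \<Sum>w\<in>W. g w)"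
  proof (rule integral_cong_AE)
    have "(\<Sum>c\<in>C. indicator {W. c \<in> W} W * g c) = (\<Sum>w\<in>W. g w)" if "W \<subseteq> C" for W
    proof -
      have "(\<Sum>c\<in>C. indicator {W. c \<in> W} W * g c) = (\<Sum>c\<in>C \<inter> W. g c)"
        using \<open>finite C\<close> by (simp add: sum.inter_restrict indicator_def if_distrib)
      then show ?thesis using that by (simp add: Int_absorb1)
    qed
    then show "AE W in Wd. (\<Sum>c\<in>C. indicator {W. c \<in> W} W * g c) = (\<Sum>w\<in>W. g w)"
      using assms(2) by (simp add: AE_measure_pmf_iff)
  qed simp_all
  finally show ?thesis .
qed

lemma stable_lottery_UW_le_expected_committee_UW:
  assumes inst: "l1_instance d V C vv cv" and cons: "consistent_profile d V C vv cv rk"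
    and stable: "stable_lottery V C rk k Wd" and "c \<in> C"
  shows "UW d V vv cv c - real (card V) / real k
    \<le> measure_pmf.expectation Wd (\<lambda>W. \<Sum>w\<in>W. UW d V vv cv w)"
proof -
  have fin: "finite (set_pmf Wd)"
    using inst stable stable_lottery_finite_set_pmf unfolding l1_instance_def by blast
  have "UW d V vv cv c - real (card V) / real k
      \<le> UW d V vv cv c - measure_pmf.expectation Wd (\<lambda>W. real (card (S_set V rk c W)))"
    using stable \<open>c \<in> C\<close> unfolding stable_lottery_def by simp
  also have "\<dots> = measure_pmf.expectation Wd (\<lambda>W. UW d V vv cv c - real (card (S_set V rk c W)))"
    using fin by (simp add: integrable_measure_pmf_finite)
  also have "\<dots> \<le> measure_pmf.expectation Wd (\<lambda>W. \<Sum>w\<in>W. UW d V vv cv w)"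
    using fin stable UW_le_committee_UW_plus_card_S_set[OF inst cons \<open>c \<in> C\<close>]
    unfolding stable_lottery_def
    by (intro integral_mono_AE) (auto simp: integrable_measure_pmf_finite AE_measure_pmf_iff
        diff_le_eq)
  finally show ?thesis .
qed

lemma sum_pslr_prob_mult_eq_expectation:
  assumes "finite C" "stable_lottery V C rk k Wd"
  shows "(\<Sum>c\<in>C. pslr_prob d Wd c * g c)
    = measure_pmf.expectation Wd (\<lambda>W. \<Sum>w\<in>W. g w) / real (2 * d)"
proof -
  have "(\<Sum>c\<in>C. pslr_prob d Wd c * g c)
      = (\<Sum>c\<in>C. measure_pmf.prob Wd {W. c \<in> W} * g c) / real (2 * d)"
    unfolding pslr_prob_def by (simp add: sum_divide_distrib)
  also have "\<dots> = measure_pmf.expectation Wd (\<lambda>W. \<Sum>w\<in>W. g w) / real (2 * d)"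
    using assms unfolding stable_lottery_def by (simp add: sum_prob_mem_eq_expectation)
  finally show ?thesis .
qed

theorem theorem9:
  shows "\<exists>K::real. K > 0 \<and>
    (\<forall>d::nat. \<forall>V C vv cv rk Wd.
       d \<ge> 1 \<longrightarrow> l1_instance d V C vv cv \<longrightarrow>
       consistent_profile d V C vv cv rk \<longrightarrow>
       stable_lottery V C rk (2 * d) Wd \<longrightarrow>
       (\<forall>c\<in>C. UW d V vv cv c
          \<le> K * real d * (\<Sum>c'\<in>C. pslr_prob d Wd c' * UW d V vv cv c')))"
proof (intro exI[of _ 4] conjI allI impI ballI)
  fix d :: nat and V C vv cv rk Wd c
  assume "d \<ge> 1" and inst: "l1_instance d V C vv cv" and cons: "consistent_profile d V C vv cv rk"
    and stable: "stable_lottery V C rk (2 * d) Wd" and "c \<in> C"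
  let ?U = "UW d V vv cv"
  have "finite C" using inst unfolding l1_instance_def by simp
  have "Max (?U ` C) \<in> ?U ` C"
    using \<open>finite C\<close> \<open>c \<in> C\<close> by (intro Max_in) auto
  then obtain c0 where "c0 \<in> C" and "?U c0 = Max (?U ` C)"
    by auto
  then have max: "\<forall>c\<in>C. ?U c \<le> ?U c0"
    using \<open>finite C\<close> by simp
  have "real (card V) / real (2 * d) \<le> ?U c0 / 2"
    using card_le_dim_mult_max_UW[OF inst \<open>c0 \<in> C\<close> max] \<open>d \<ge> 1\<close>
    by (simp add: field_simps)
  moreover have "?U c0 - real (card V) / real (2 * d)
      \<le> real (2 * d) * (\<Sum>c'\<in>C. pslr_prob d Wd c' * ?U c')"
    using stable_lottery_UW_le_expected_committee_UW[OF inst cons stable \<open>c0 \<in> C\<close>]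
      sum_pslr_prob_mult_eq_expectation[OF \<open>finite C\<close> stable] \<open>d \<ge> 1\<close> by simp
  ultimately have "?U c0 \<le> 4 * real d * (\<Sum>c'\<in>C. pslr_prob d Wd c' * ?U c')"
    by simp
  then show "?U c \<le> 4 * real d * (\<Sum>c'\<in>C. pslr_prob d Wd c' * ?U c')"
    using max \<open>c \<in> C\<close> by fastforce
qed simp

end
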